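(* Let $N_0\in\mathbb{N}$ be a constant such that, for some $C'>0$, $\frac{R^2}{w(B(x,R))}\pi(B(x,R))\le C'(R/\rho_w(x,\mu))^{N_0}$ for all $x\in\mathbb{R}^d$ and $R\ge\rho_w(x,\mu)$. Let $c>0$, $x\in\mathbb{R}^d$, $t>0$, and write $w(B(x\wedge y,\sqrt t))=\min\{w(B(x,\sqrt t)),w(B(y,\sqrt t))\}$. (a) If $\sqrt t\le a\rho_w(x,\mu)$ for some $a>0$, then there is $C=C(a)>0$ such that \[\int_{\mathbb{R}^d}\frac{1}{w(B(x\wedge y,\sqrt t))}\exp\Big(-\frac{|x-y|^2}{ct}\Big)d\pi(y)\le\frac Ct\Big(\frac{\sqrt t}{\rho_w(x,\mu)}\Big)^\delta.\] (b) If $\sqrt t\ge a\rho_w(x,\mu)$ for some $a>0$, then there is $C=C(a)>0$ such that \[\int_{\mathbb{R}^d}\frac{1}{w(B(x\wedge y,\sqrt t))}\exp\Big(-\frac{|x-y|^2}{ct}\Big)d\pi(y)\le\frac Ct\Big(\frac{\sqrt t}{\rho_w(x,\mu)}\Big)^{N_0}.\]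
   Context: Setting: $d\ge3$; $w\in A_2$ is a weight on $\mathbb{R}^d$, $w(E)=\int_Ew\,dx$, and there exist $\beta>2$, $C>0$ with $w(B(x,tr))\ge Ct^\beta w(B(x,r))$ for all $x$, $r>0$, $t>1$. $\mu$ is a positive Radon measure, $d\pi=w\,d\mu$, with constants $C_0,\delta,C_1>0$ such that (M1) $\frac{r^2}{w(B(x,r))}\pi(B(x,r))\le C_0 (r/R)^\delta \frac{R^2}{w(B(x,R))}\pi(B(x,R))$ for all $x$, $0<r<R$; (M2) $\pi(B(x,2r))\le C_1(\pi(B(x,r))+w(B(x,r))/r^2)$ for all $x$, $r>0$. The critical function is $\rho_w(x,\mu)=\sup\{r>0:\frac{r^2}{w(B(x,r))}\pi(B(x,r))\le C_1\}$. Such an $N_0$ exists. *)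

theory Defs
  imports "HOL-Analysis.Analysis"
begin

definition wmeas :: "('a::euclidean_space \<Rightarrow> real) \<Rightarrow> 'a set \<Rightarrow> real" where
  "wmeas w E = enn2real (\<integral>\<^sup>+ x\<in>E. ennreal (w x) \<partial>lborel)"

definition A2_weight :: "('a::euclidean_space \<Rightarrow> real) \<Rightarrow> bool" where
  "A2_weight w \<longleftrightarrow> w \<in> borel_measurable borel \<and> (\<forall>x. 0 \<le> w x) \<and>
     (\<forall>K. compact K \<longrightarrow> (\<integral>\<^sup>+ x\<in>K. ennreal (w x) \<partial>lborel) < \<infinity>) \<and>
     (\<exists>A::real. \<forall>x r. 0 < r \<longrightarrow>
        (\<integral>\<^sup>+ y\<in>ball x r. ennreal (w y) \<partial>lborel) *
        (\<integral>\<^sup>+ y\<in>ball x r. inverse (ennreal (w y)) \<partial>lborel)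
          \<le> ennreal A * (emeasure lborel (ball x r))\<^sup>2)"

definition radon_measure :: "'a::euclidean_space measure \<Rightarrow> bool" where
  "radon_measure M \<longleftrightarrow> sets M = sets borel \<and> (\<forall>K. compact K \<longrightarrow> emeasure M K < \<infinity>)"

definition crit_set :: "('a::euclidean_space \<Rightarrow> real) \<Rightarrow> 'a measure \<Rightarrow> real \<Rightarrow> 'a \<Rightarrow> real set" where
  "crit_set w M C1 x = {r. 0 < r \<and>
     ennreal (r\<^sup>2 / wmeas w (ball x r)) * emeasure (density M (\<lambda>y. ennreal (w y))) (ball x r)
       \<le> ennreal C1}"

definition rho_w :: "('a::euclidean_space \<Rightarrow> real) \<Rightarrow> 'a measure \<Rightarrow> real \<Rightarrow> 'a \<Rightarrow> real" where
  "rho_w w M C1 x = Sup (crit_set w M C1 x)"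

end

(*
  An A_2 weight is doubling: Cauchy-Schwarz turns the A_2 condition into w(B) |E|^2 <= A |B|^2 w(E)
  for E inside a ball B, hence w(B(y,R)) <= K (R/r)^(2d) w(B(y,r)). Cut the space into the dyadic
  shells 2^(k-1) sqrt t <= |x - y| < 2^k sqrt t. On the k-th shell doubling bounds the integrand by
  2^(O(k)) exp(-4^k/(4c)) / w(B(x, 2^k sqrt t)), so the integral is at most
  t^(-1) sum_k 2^(O(k)) exp(-4^k/(4c)) V(2^k sqrt t), where V(R) = R^2 pi(B(x,R)) / w(B(x,R)).
  Below the critical radius rho, (M1) and the definition of rho give V(R) <= C (R/rho)^delta; above
  it V(R) <= C' (R/rho)^N0 by hypothesis. In both regimes V(2^k sqrt t) grows at most geometrically
  in k, which the Gaussian factor absorbs.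
*)

theory Submission
  imports Defs "HOL-Real_Asymp.Real_Asymp"
begin

definition scaled_mass :: "('a::euclidean_space \<Rightarrow> real) \<Rightarrow> 'a measure \<Rightarrow> 'a \<Rightarrow> real \<Rightarrow> ennreal" where
  "scaled_mass w \<pi> x R = ennreal (R\<^sup>2 / wmeas w (ball x R)) * emeasure \<pi> (ball x R)"

definition gauss_integral ::
    "('a::euclidean_space \<Rightarrow> real) \<Rightarrow> 'a measure \<Rightarrow> real \<Rightarrow> 'a \<Rightarrow> real \<Rightarrow> ennreal" where
  "gauss_integral w \<pi> c x t =
     (\<integral>\<^sup>+ y. ennreal (1 / min (wmeas w (ball x (sqrt t))) (wmeas w (ball y (sqrt t)))
                   * exp (- (dist x y)\<^sup>2 / (c * t))) \<partial>\<pi>)"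

lemma wmeas_nonneg: "0 \<le> wmeas w E"
  unfolding wmeas_def by simp

lemma A2_weight_nn_integral_bounded_finite:
  assumes "A2_weight w" "bounded E"
  shows "(\<integral>\<^sup>+ x\<in>E. ennreal (w x) \<partial>lborel) < \<infinity>"
proof -
  obtain c r where "E \<subseteq> cball c r"
    using assms(2) bounded_subset_cball by blast
  then have "(\<integral>\<^sup>+ x\<in>E. ennreal (w x) \<partial>lborel) \<le> (\<integral>\<^sup>+ x\<in>cball c r. ennreal (w x) \<partial>lborel)"
    by (intro nn_integral_mono) (auto split: split_indicator)
  also have "\<dots> < \<infinity>"
    using assms(1) unfolding A2_weight_def by auto
  finally show ?thesis .
qed

lemma ennreal_wmeas:
  assumes "A2_weight w" "bounded E"
  shows "ennreal (wmeas w E) = (\<integral>\<^sup>+ x\<in>E. ennreal (w x) \<partial>lborel)"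
  unfolding wmeas_def using A2_weight_nn_integral_bounded_finite[OF assms] by (simp add: less_top)

lemma wmeas_mono:
  assumes "A2_weight w" "bounded F" "E \<subseteq> F"
  shows "wmeas w E \<le> wmeas w F"
proof -
  have "(\<integral>\<^sup>+ x\<in>E. ennreal (w x) \<partial>lborel) \<le> (\<integral>\<^sup>+ x\<in>F. ennreal (w x) \<partial>lborel)"
    using assms(3) by (intro nn_integral_mono) (auto split: split_indicator)
  then show ?thesis
    unfolding wmeas_def using A2_weight_nn_integral_bounded_finite[OF assms(1,2)]
    by (intro enn2real_mono) auto
qed

lemma ennreal_sqrt_power2: "0 \<le> a \<Longrightarrow> (ennreal (sqrt a))\<^sup>2 = ennreal a"
  by (subst ennreal_power) auto

lemma emeasure_sq_le_nn_integral_weight_inverse: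
  assumes w[measurable]: "w \<in> borel_measurable M" and w_nonneg: "\<And>x. 0 \<le> w x"
    and E[measurable]: "E \<in> sets M"
    and finite_inverse: "(\<integral>\<^sup>+ x\<in>E. inverse (ennreal (w x)) \<partial>M) < \<infinity>"
  shows "(emeasure M E)\<^sup>2
           \<le> (\<integral>\<^sup>+ x\<in>E. ennreal (w x) \<partial>M) * (\<integral>\<^sup>+ x\<in>E. inverse (ennreal (w x)) \<partial>M)"
proof -
  define f where "f x = ennreal (sqrt (w x)) * indicator E x" for x
  define g where "g x = inverse (ennreal (sqrt (w x))) * indicator E x" for x
  have [measurable]: "f \<in> borel_measurable M" "g \<in> borel_measurable M"
    unfolding f_def g_def by measurable
  have "AE x in M. inverse (ennreal (w x)) * indicator E x \<noteq> \<infinity>"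
    using finite_inverse by (intro nn_integral_PInf_AE) auto
  then have "AE x in M. f x * g x = indicator E x"
  proof eventually_elim
    case (elim x)
    show ?case
    proof (cases "x \<in> E")
      case True
      with elim w_nonneg[of x] have "0 < w x"
        by (cases "w x = 0") auto
      then show ?thesis
        using True by (simp add: f_def g_def inverse_ennreal ennreal_mult[symmetric])
    qed (simp add: f_def g_def)
  qed
  then have "(\<integral>\<^sup>+ x. f x * g x \<partial>M) = emeasure M E"
    by (simp add: nn_integral_cong_AE)
  moreover have "(\<integral>\<^sup>+ x. f x ^ 2 \<partial>M) = (\<integral>\<^sup>+ x\<in>E. ennreal (w x) \<partial>M)"
    by (intro nn_integral_cong)
      (auto simp: f_def w_nonneg ennreal_sqrt_power2 split: split_indicator)
  moreover have "(\<integral>\<^sup>+ x. g x ^ 2 \<partial>M) = (\<integral>\<^sup>+ x\<in>E. inverse (ennreal (w x)) \<partial>M)"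
    by (intro nn_integral_cong)
      (auto simp: g_def w_nonneg ennreal_inverse_power[symmetric] ennreal_sqrt_power2
        split: split_indicator)
  ultimately show ?thesis
    using Cauchy_Schwarz_nn_integral[of f M g] by simp
qed

lemma nn_integral_weight_mult_emeasure_sq_le:
  assumes w: "w \<in> borel_measurable M" "\<And>x. 0 \<le> w x"
    and E: "E \<in> sets M" "E \<subseteq> B"
    and A2: "(\<integral>\<^sup>+ x\<in>B. ennreal (w x) \<partial>M) * (\<integral>\<^sup>+ x\<in>B. inverse (ennreal (w x)) \<partial>M) \<le> K"
    and K: "K < \<infinity>"
  shows "(\<integral>\<^sup>+ x\<in>B. ennreal (w x) \<partial>M) * (emeasure M E)\<^sup>2 \<le> (\<integral>\<^sup>+ x\<in>E. ennreal (w x) \<partial>M) * K"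
proof -
  define I where "I S = (\<integral>\<^sup>+ x\<in>S. ennreal (w x) \<partial>M)" for S
  define J where "J S = (\<integral>\<^sup>+ x\<in>S. inverse (ennreal (w x)) \<partial>M)" for S
  have J_mono: "J E \<le> J B"
    unfolding J_def using E(2) by (intro nn_integral_mono) (auto split: split_indicator)
  show ?thesis
  proof (cases "J E = \<infinity>")
    case True
    then have "J B = \<infinity>"
      using J_mono by (simp add: top_unique)
    with A2 K have "I B = 0"
      unfolding I_def J_def by (cases "I B = 0") (auto simp: I_def top_unique)
    then show ?thesis
      by (simp add: I_def)
  next
    case False
    have "(emeasure M E)\<^sup>2 \<le> I E * J E"
      using emeasure_sq_le_nn_integral_weight_inverse[OF w E(1)] False
      unfolding I_def J_def by (simp add: less_top)
    also have "\<dots> \<le> I E * J B"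
      using J_mono by (rule mult_left_mono) simp
    finally have "I B * (emeasure M E)\<^sup>2 \<le> I E * (I B * J B)"
      by (simp add: mult_left_mono ac_simps)
    also have "\<dots> \<le> I E * K"
      using A2 unfolding I_def J_def by (rule mult_left_mono) simp
    finally show ?thesis
      unfolding I_def .
  qed
qed

lemma A2_weight_measure_ratio:
  fixes w :: "'a::euclidean_space \<Rightarrow> real"
  assumes wA2: "A2_weight w"
  obtains A where "0 \<le> A"
    and "\<And>y R E. 0 < R \<Longrightarrow> E \<in> sets lborel \<Longrightarrow> E \<subseteq> ball y R \<Longrightarrow>
           wmeas w (ball y R) * (measure lborel E)\<^sup>2 \<le> A * (measure lborel (ball y R))\<^sup>2 * wmeas w E"
proof -
  obtain A0 where A0: "\<And>y R. 0 < R \<Longrightarrow>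
        (\<integral>\<^sup>+ x\<in>ball y R. ennreal (w x) \<partial>lborel) * (\<integral>\<^sup>+ x\<in>ball y R. inverse (ennreal (w x)) \<partial>lborel)
          \<le> ennreal A0 * (emeasure lborel (ball y R))\<^sup>2"
    using wA2 unfolding A2_weight_def by blast
  have w: "w \<in> borel_measurable lborel" "\<And>x. 0 \<le> w x"
    using wA2 unfolding A2_weight_def by auto
  have "wmeas w (ball y R) * (measure lborel E)\<^sup>2 \<le> max A0 0 * (measure lborel (ball y R))\<^sup>2 * wmeas w E"
    if R: "0 < R" and E: "E \<in> sets lborel" "E \<subseteq> ball y R" for y R and E :: "'a set"
  proof -
    have "emeasure lborel E \<le> emeasure lborel (ball y R)"
      by (rule emeasure_mono[OF E(2)]) simp
    then have "emeasure lborel E < \<infinity>"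
      using emeasure_lborel_ball_finite by (rule le_less_trans)
    then have finite: "emeasure lborel E = ennreal (measure lborel E)"
      "emeasure lborel (ball y R) = ennreal (measure lborel (ball y R))"
      using emeasure_lborel_ball_finite[of y R] by (auto intro!: emeasure_eq_ennreal_measure)
    have "ennreal A0 * (emeasure lborel (ball y R))\<^sup>2 = ennreal (max A0 0 * (measure lborel (ball y R))\<^sup>2)"
      unfolding finite by (cases "0 \<le> A0") (simp_all add: ennreal_neg ennreal_mult ennreal_power)
    with A0[of R y] R have "(\<integral>\<^sup>+ x\<in>ball y R. ennreal (w x) \<partial>lborel) * (emeasure lborel E)\<^sup>2
        \<le> (\<integral>\<^sup>+ x\<in>E. ennreal (w x) \<partial>lborel) * ennreal (max A0 0 * (measure lborel (ball y R))\<^sup>2)"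
      by (intro nn_integral_weight_mult_emeasure_sq_le[OF w E]) auto
    then have "ennreal (wmeas w (ball y R)) * (emeasure lborel E)\<^sup>2
        \<le> ennreal (wmeas w E) * ennreal (max A0 0 * (measure lborel (ball y R))\<^sup>2)"
      unfolding ennreal_wmeas[OF wA2 bounded_ball] ennreal_wmeas[OF wA2 bounded_subset[OF bounded_ball E(2)]] .
    then show ?thesis
      unfolding finite
      by (simp add: wmeas_nonneg ennreal_mult'[symmetric] ennreal_power ac_simps)
  qed
  with that[of "max A0 0"] show ?thesis by simp
qed

lemma A2_weight_doubling:
  fixes w :: "'a::euclidean_space \<Rightarrow> real"
  assumes "A2_weight w"
  obtains K where "0 < K"
    and "\<And>y r R. 0 < r \<Longrightarrow> r \<le> R \<Longrightarrow>
           wmeas w (ball y R) \<le> K * (R / r) ^ (2 * DIM('a)) * wmeas w (ball y r)"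
proof -
  obtain A where A: "0 \<le> A"
    and ratio: "\<And>y R E. 0 < R \<Longrightarrow> E \<in> sets lborel \<Longrightarrow> E \<subseteq> ball y R \<Longrightarrow>
           wmeas w (ball y R) * (measure lborel E)\<^sup>2 \<le> A * (measure lborel (ball y R))\<^sup>2 * wmeas w E"
    using A2_weight_measure_ratio[OF assms] by blast
  define m where "m = measure lborel (ball (0::'a) 1)"
  have m: "0 < m"
    unfolding m_def using content_ball_pos[of 1 "0::'a"] by simp
  have "wmeas w (ball y R) \<le> (A + 1) * (R / r) ^ (2 * DIM('a)) * wmeas w (ball y r)"
    if r: "0 < r" "r \<le> R" for y r R
  proof -
    have "measure lborel (ball y s) = s ^ DIM('a) * m" if "0 \<le> s" for s
      unfolding m_def using content_ball_conv_unit_ball[OF that, of y] by simp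
    with ratio[of R "ball y r" y] r
    have "wmeas w (ball y R) * (r ^ DIM('a) * m)\<^sup>2 \<le> A * (R ^ DIM('a) * m)\<^sup>2 * wmeas w (ball y r)"
      by (simp add: subset_ball)
    then have "wmeas w (ball y R) \<le> A * (R / r) ^ (2 * DIM('a)) * wmeas w (ball y r)"
      using r m by (simp add: field_simps power_mult power_mult_distrib power_divide)
    also have "\<dots> \<le> (A + 1) * (R / r) ^ (2 * DIM('a)) * wmeas w (ball y r)"
      using r by (intro mult_right_mono) (auto simp: wmeas_nonneg)
    finally show ?thesis .
  qed
  with that[of "A + 1"] A show ?thesis by simp
qed

lemma wmeas_ball_le_min:
  fixes w :: "'a::euclidean_space \<Rightarrow> real"
  assumes wA2: "A2_weight w" and K: "0 \<le> K"
    and doubling: "\<And>y r R. 0 < r \<Longrightarrow> r \<le> R \<Longrightarrow>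
           wmeas w (ball y R) \<le> K * (R / r) ^ n * wmeas w (ball y r)"
    and r: "0 < r" "r \<le> R" and xy: "dist x y < R"
  shows "wmeas w (ball x R) \<le> K * (2 * R / r) ^ n * min (wmeas w (ball x r)) (wmeas w (ball y r))"
proof -
  have "K * (R / r) ^ n \<le> K * (2 * R / r) ^ n"
    using r K by (intro mult_left_mono power_mono divide_right_mono) auto
  then have "wmeas w (ball x R) \<le> K * (2 * R / r) ^ n * wmeas w (ball x r)"
    using doubling[OF r] wmeas_nonneg[of w "ball x r"] by (meson mult_right_mono order_trans)
  moreover have "ball x R \<subseteq> ball y (2 * R)"
  proof
    fix z assume "z \<in> ball x R"
    then show "z \<in> ball y (2 * R)"
      using xy dist_triangle[of y z x] by (simp add: dist_commute)
  qed
  then have "wmeas w (ball x R) \<le> wmeas w (ball y (2 * R))"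
    by (intro wmeas_mono[OF wA2]) auto
  with doubling[of r "2 * R" y] r have "wmeas w (ball x R) \<le> K * (2 * R / r) ^ n * wmeas w (ball y r)"
    by simp
  ultimately show ?thesis by (simp add: min_def)
qed

lemma power2_two_power: "((2::real) ^ k)\<^sup>2 = 4 ^ k"
  by (simp add: power2_eq_square flip: power_mult_distrib)

(* k is the least index with d < 2^k s; the second inequality then also holds for k = 0, so the
   Gaussian factor is bounded by exp ((1 - 4^k) / (4 c)) uniformly in k. *)
lemma dyadic_shell_index:
  fixes d s :: real
  assumes "0 \<le> d" "0 < s"
  obtains k :: nat where "d < 2 ^ k * s" and "4 ^ k * s\<^sup>2 \<le> 4 * d\<^sup>2 + s\<^sup>2"
proof -
  have "\<exists>k. d / s < 2 ^ k"
    by (rule real_arch_pow) simp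
  then have ex: "\<exists>k::nat. d < 2 ^ k * s"
    using assms(2) by (simp add: divide_less_eq)
  define k where "k = (LEAST k::nat. d < 2 ^ k * s)"
  have "d < 2 ^ k * s"
    unfolding k_def by (rule LeastI_ex[OF ex])
  moreover have "4 ^ k * s\<^sup>2 \<le> 4 * d\<^sup>2 + s\<^sup>2"
  proof (cases k)
    case (Suc j)
    then have "2 ^ j * s \<le> d"
      using not_less_Least[of j "\<lambda>k. d < 2 ^ k * s"] unfolding k_def by force
    then have "(2 ^ j * s)\<^sup>2 \<le> d\<^sup>2"
      using assms by (intro power_mono) auto
    moreover have "(2 ^ j * s)\<^sup>2 = 4 ^ j * s\<^sup>2"
      by (simp add: power_mult_distrib power2_two_power)
    ultimately show ?thesis
      using Suc by (simp add: mult.assoc) (use zero_le_power2[of s] in linarith)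
  qed simp
  ultimately show ?thesis by (rule that)
qed

lemma gauss_kernel_le_dyadic:
  fixes w :: "'a::euclidean_space \<Rightarrow> real"
  assumes wA2: "A2_weight w" and K: "0 \<le> K"
    and doubling: "\<And>y r R. 0 < r \<Longrightarrow> r \<le> R \<Longrightarrow>
           wmeas w (ball y R) \<le> K * (R / r) ^ n * wmeas w (ball y r)"
    and t: "0 < t" and c: "0 < c"
  obtains k where "dist x y < 2 ^ k * sqrt t"
    and "1 / min (wmeas w (ball x (sqrt t))) (wmeas w (ball y (sqrt t))) * exp (- (dist x y)\<^sup>2 / (c * t))
           \<le> K * 2 ^ (n * (k + 1)) * exp ((1 - 4 ^ k) / (4 * c)) / wmeas w (ball x (2 ^ k * sqrt t))"
proof -
  obtain k where k: "dist x y < 2 ^ k * sqrt t" "4 ^ k * t \<le> 4 * (dist x y)\<^sup>2 + t"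
    using dyadic_shell_index[of "dist x y" "sqrt t"] t by auto
  define m where "m = min (wmeas w (ball x (sqrt t))) (wmeas w (ball y (sqrt t)))"
  define W where "W = wmeas w (ball x (2 ^ k * sqrt t))"
  define D where "D = K * 2 ^ (n * (k + 1))"
  have "sqrt t \<le> 2 ^ k * sqrt t"
    using t by simp
  moreover have "(2 * (2 ^ k * sqrt t) / sqrt t) ^ n = (2::real) ^ (n * (k + 1))"
    using t by (simp add: power_add power_mult[symmetric] mult.commute)
  ultimately have W_le: "W \<le> D * m"
    using wmeas_ball_le_min[OF wA2 K doubling _ _ k(1), of "sqrt t"] t
    unfolding W_def D_def m_def by simp
  have "- (dist x y)\<^sup>2 / (c * t) \<le> (1 - 4 ^ k) / (4 * c)"
    using k(2) t c by (simp add: field_simps)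
  then have exp_le: "exp (- (dist x y)\<^sup>2 / (c * t)) \<le> exp ((1 - 4 ^ k) / (4 * c))"
    by simp
  have "1 / m * exp (- (dist x y)\<^sup>2 / (c * t)) \<le> D * exp ((1 - 4 ^ k) / (4 * c)) / W"
  proof (cases "m = 0")
    case False
    then have "0 < m"
      unfolding m_def using wmeas_nonneg[of w] by (simp add: order_less_le)
    moreover have "m \<le> W"
      unfolding m_def W_def using \<open>sqrt t \<le> 2 ^ k * sqrt t\<close>
      by (intro min.coboundedI1 wmeas_mono[OF wA2]) auto
    ultimately have "1 / m \<le> D / W"
      using W_le by (simp add: field_simps)
    then have "1 / m * exp (- (dist x y)\<^sup>2 / (c * t)) \<le> D / W * exp ((1 - 4 ^ k) / (4 * c))"
      using K by (intro mult_mono[OF _ exp_le]) (auto simp: D_def W_def wmeas_nonneg)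
    then show ?thesis
      by simp
  qed (use K in \<open>simp add: D_def W_def wmeas_nonneg\<close>)
  with k(1) that show ?thesis
    unfolding m_def W_def D_def by blast
qed

lemma ennreal_mult_scaled_mass:
  assumes "0 \<le> a"
  shows "ennreal (a * (R\<^sup>2 / wmeas w (ball x R))) * emeasure \<pi> (ball x R) = ennreal a * scaled_mass w \<pi> x R"
proof -
  have "ennreal (a * (R\<^sup>2 / wmeas w (ball x R))) = ennreal a * ennreal (R\<^sup>2 / wmeas w (ball x R))"
    using assms by (intro ennreal_mult) (auto simp: wmeas_nonneg)
  then show ?thesis
    by (simp only: scaled_mass_def mult.assoc)
qed

lemma gauss_integral_le_dyadic_sum:
  fixes w :: "'a::euclidean_space \<Rightarrow> real"
  assumes wA2: "A2_weight w" and K: "0 \<le> K"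
    and doubling: "\<And>y r R. 0 < r \<Longrightarrow> r \<le> R \<Longrightarrow>
           wmeas w (ball y R) \<le> K * (R / r) ^ n * wmeas w (ball y r)"
    and sets: "sets \<pi> = sets borel" and t: "0 < t" and c: "0 < c"
  shows "gauss_integral w \<pi> c x t
           \<le> (\<Sum>k. ennreal (K * 2 ^ (n * (k + 1)) * exp ((1 - 4 ^ k) / (4 * c)) / (4 ^ k * t))
                    * scaled_mass w \<pi> x (2 ^ k * sqrt t))"
proof -
  define R where "R k = 2 ^ k * sqrt t" for k :: nat
  define e where "e k = K * 2 ^ (n * (k + 1)) * exp ((1 - 4 ^ k) / (4 * c))" for k :: nat
  define f where "f k y = ennreal (e k / wmeas w (ball x (R k))) * indicator (ball x (R k)) y" for k y
  have "ennreal (1 / min (wmeas w (ball x (sqrt t))) (wmeas w (ball y (sqrt t)))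
                   * exp (- (dist x y)\<^sup>2 / (c * t))) \<le> (\<Sum>k. f k y)" for y
  proof -
    obtain k where k: "dist x y < R k"
      and "1 / min (wmeas w (ball x (sqrt t))) (wmeas w (ball y (sqrt t))) * exp (- (dist x y)\<^sup>2 / (c * t))
             \<le> e k / wmeas w (ball x (R k))"
      using gauss_kernel_le_dyadic[OF wA2 K doubling t c] unfolding e_def R_def by blast
    then have "ennreal (1 / min (wmeas w (ball x (sqrt t))) (wmeas w (ball y (sqrt t)))
                   * exp (- (dist x y)\<^sup>2 / (c * t))) \<le> f k y"
      by (simp add: f_def ennreal_leI dist_commute)
    also have "\<dots> \<le> (\<Sum>k. f k y)"
      using sum_le_suminf[OF summableI, of "{k}" "\<lambda>k. f k y"] by simp
    finally show ?thesis .
  qed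
  then have "gauss_integral w \<pi> c x t \<le> (\<integral>\<^sup>+ y. (\<Sum>k. f k y) \<partial>\<pi>)"
    unfolding gauss_integral_def by (intro nn_integral_mono) simp
  also have "\<dots> = (\<Sum>k. \<integral>\<^sup>+ y. f k y \<partial>\<pi>)"
    using sets unfolding f_def
    by (intro nn_integral_suminf borel_measurable_times_ennreal borel_measurable_indicator) auto
  also have "\<dots> = (\<Sum>k. ennreal (e k / wmeas w (ball x (R k))) * emeasure \<pi> (ball x (R k)))"
    using sets by (simp add: f_def nn_integral_cmult_indicator)
  also have "\<dots> = (\<Sum>k. ennreal (e k / (4 ^ k * t)) * scaled_mass w \<pi> x (R k))"
  proof (rule suminf_cong)
    fix k
    have "(R k)\<^sup>2 = 4 ^ k * t"
      using t by (simp add: R_def power_mult_distrib power2_two_power)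
    then have "e k / wmeas w (ball x (R k)) = e k / (4 ^ k * t) * ((R k)\<^sup>2 / wmeas w (ball x (R k)))"
      using t by simp
    then show "ennreal (e k / wmeas w (ball x (R k))) * emeasure \<pi> (ball x (R k))
        = ennreal (e k / (4 ^ k * t)) * scaled_mass w \<pi> x (R k)"
      using K t ennreal_mult_scaled_mass[of "e k / (4 ^ k * t)"] by (simp add: e_def)
  qed
  finally show ?thesis
    unfolding e_def R_def .
qed

lemma summable_power_mult_exp_neg_four_power:
  fixes q c :: real
  assumes q: "0 \<le> q" and c: "0 < c"
  shows "summable (\<lambda>k. q ^ k * exp (- (4 ^ k) / c))"
proof -
  have "(\<lambda>k::nat. exp (- 3 * 4 ^ k / c)) \<longlonglongrightarrow> 0"
    using c by real_asymp
  then have "(\<lambda>k. q * exp (- 3 * 4 ^ k / c)) \<longlonglongrightarrow> 0"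
    by (rule tendsto_mult_right_zero)
  then have "eventually (\<lambda>k. q * exp (- 3 * 4 ^ k / c) < 1 / 2) sequentially"
    by (rule order_tendstoD) simp
  then obtain N where N: "\<And>k. N \<le> k \<Longrightarrow> q * exp (- 3 * 4 ^ k / c) < 1 / 2"
    by (auto simp: eventually_sequentially)
  show ?thesis
  proof (rule summable_ratio_test[where c = "1 / 2" and N = N])
    fix k assume "N \<le> k"
    have "q ^ Suc k * exp (- (4 ^ Suc k) / c)
        = (q * exp (- 3 * 4 ^ k / c)) * (q ^ k * exp (- (4 ^ k) / c))"
      by (simp add: mult_exp_exp field_simps)
    also have "\<dots> \<le> 1 / 2 * (q ^ k * exp (- (4 ^ k) / c))"
      using N[OF \<open>N \<le> k\<close>] q by (intro mult_right_mono) simp_all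
    finally show "norm (q ^ Suc k * exp (- (4 ^ Suc k) / c)) \<le> 1 / 2 * norm (q ^ k * exp (- (4 ^ k) / c))"
      using q by simp
  qed simp
qed

lemma summable_dyadic_gauss_coeff:
  fixes K L c :: real
  assumes c: "0 < c" and L: "0 \<le> L"
  shows "summable (\<lambda>k. K * 2 ^ (n * (k + 1)) * exp ((1 - 4 ^ k) / (4 * c)) / 4 ^ k * L ^ k)"
proof -
  have "K * 2 ^ (n * (k + 1)) * exp ((1 - 4 ^ k) / (4 * c)) / 4 ^ k * L ^ k
      = K * 2 ^ n * exp (1 / (4 * c)) * ((2 ^ n * L / 4) ^ k * exp (- (4 ^ k) / (4 * c)))" for k
  proof -
    have "(2::real) ^ (n * (k + 1)) = 2 ^ n * (2 ^ n) ^ k"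
      by (simp add: power_add flip: power_mult)
    moreover have "exp ((1 - 4 ^ k) / (4 * c)) = exp (1 / (4 * c)) * exp (- (4 ^ k) / (4 * c))"
      by (simp add: diff_divide_distrib exp_diff exp_minus field_simps)
    ultimately show ?thesis
      by (simp add: power_mult_distrib power_divide)
  qed
  then show ?thesis
    using summable_mult[OF summable_power_mult_exp_neg_four_power[of "2 ^ n * L / 4" "4 * c"]] L c
    by simp
qed

lemma gauss_integral_dyadic_bound:
  fixes w :: "'a::euclidean_space \<Rightarrow> real"
  assumes wA2: "A2_weight w" and sets: "sets \<pi> = sets borel" and c: "0 < c" and L: "0 \<le> L"
  obtains C where "0 < C"
    and "\<And>x t B. 0 < t \<Longrightarrow> 0 \<le> B \<Longrightarrow>
           (\<And>k. scaled_mass w \<pi> x (2 ^ k * sqrt t) \<le> ennreal (B * L ^ k)) \<Longrightarrow>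
           gauss_integral w \<pi> c x t \<le> ennreal (C * B / t)"
proof -
  obtain K where K: "0 < K"
    and doubling: "\<And>y r R. 0 < r \<Longrightarrow> r \<le> R \<Longrightarrow>
           wmeas w (ball y R) \<le> K * (R / r) ^ (2 * DIM('a)) * wmeas w (ball y r)"
    using A2_weight_doubling[OF wA2] by blast
  define n where "n = 2 * DIM('a)"
  define a where "a k = K * 2 ^ (n * (k + 1)) * exp ((1 - 4 ^ k) / (4 * c)) / 4 ^ k" for k :: nat
  define \<beta> where "\<beta> k = a k * L ^ k" for k
  have a_nonneg: "0 \<le> a k" for k
    using K by (simp add: a_def)
  have summable: "summable \<beta>"
    unfolding \<beta>_def a_def using summable_dyadic_gauss_coeff[OF c L] .
  have \<beta>_nonneg: "0 \<le> \<beta> k" for k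
    using a_nonneg L by (simp add: \<beta>_def)
  have "0 < suminf \<beta>"
    using K by (intro suminf_pos2[OF summable \<beta>_nonneg, of 0]) (simp add: \<beta>_def a_def)
  moreover have "gauss_integral w \<pi> c x t \<le> ennreal (suminf \<beta> * B / t)"
    if t: "0 < t" and B: "0 \<le> B" and mass: "\<And>k. scaled_mass w \<pi> x (2 ^ k * sqrt t) \<le> ennreal (B * L ^ k)"
    for x t B
  proof -
    have "gauss_integral w \<pi> c x t \<le> (\<Sum>k. ennreal (a k / t) * scaled_mass w \<pi> x (2 ^ k * sqrt t))"
      using gauss_integral_le_dyadic_sum[OF wA2 less_imp_le[OF K] doubling sets t c]
      by (simp add: a_def n_def mult.commute)
    also have "\<dots> \<le> (\<Sum>k. ennreal (\<beta> k * (B / t)))"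
    proof (intro suminf_le summableI)
      fix k
      have "ennreal (a k / t) * scaled_mass w \<pi> x (2 ^ k * sqrt t) \<le> ennreal (a k / t) * ennreal (B * L ^ k)"
        by (intro mult_left_mono mass) simp
      also have "\<dots> = ennreal (\<beta> k * (B / t))"
        using a_nonneg t B L by (simp add: \<beta>_def ennreal_mult[symmetric] ac_simps)
      finally show "ennreal (a k / t) * scaled_mass w \<pi> x (2 ^ k * sqrt t) \<le> ennreal (\<beta> k * (B / t))" .
    qed
    also have "\<dots> = ennreal (\<Sum>k. \<beta> k * (B / t))"
      using summable \<beta>_nonneg t B by (intro suminf_ennreal2 summable_mult2) auto
    also have "\<dots> = ennreal (suminf \<beta> * B / t)"
      using suminf_mult2[OF summable, of "B / t"] by simp
    finally show ?thesis .
  qed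
  ultimately show ?thesis
    by (rule that)
qed

lemma rho_w_pos:
  assumes "crit_set w M C1 x \<noteq> {}" "bdd_above (crit_set w M C1 x)"
  shows "0 < rho_w w M C1 x"
proof -
  obtain r where "r \<in> crit_set w M C1 x"
    using assms(1) by blast
  then show ?thesis
    using cSup_upper[OF _ assms(2)] unfolding rho_w_def crit_set_def by fastforce
qed

lemma bound_below_Sup_of_decay:
  fixes V :: "real \<Rightarrow> ennreal" and S :: "real set"
  assumes decay: "\<And>r R. 0 < r \<Longrightarrow> r < R \<Longrightarrow> V r \<le> ennreal (C0 * (r / R) powr \<delta>) * V R"
    and S: "S \<noteq> {}" and S_bound: "\<And>r. r \<in> S \<Longrightarrow> V r \<le> ennreal C1"
    and C0: "0 \<le> C0" and C1: "0 \<le> C1" and \<delta>: "0 \<le> \<delta>"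
    and R: "0 < R" "R < Sup S"
  shows "V R \<le> ennreal (C0 * C1 * 2 powr \<delta> * (R / Sup S) powr \<delta>)"
proof -
  \<comment> \<open>Sup S need not lie in S; comparing with some r in S beyond Sup S / 2 costs the factor 2 powr \<delta>.\<close>
  have "max R (Sup S / 2) < Sup S"
    using R by simp
  then obtain r where "r \<in> S" "max R (Sup S / 2) < r"
    using less_cSupD[OF S] by blast
  then have r: "r \<in> S" "R < r" "Sup S / 2 < r"
    by simp_all
  have "(R / r) powr \<delta> \<le> (2 * (R / Sup S)) powr \<delta>"
    using r R \<delta> by (intro powr_mono2) (simp_all add: field_simps)
  also have "\<dots> = 2 powr \<delta> * (R / Sup S) powr \<delta>"
    using R by (intro powr_mult)
  finally have powr_le: "(R / r) powr \<delta> \<le> 2 powr \<delta> * (R / Sup S) powr \<delta>" .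
  have "V R \<le> ennreal (C0 * (R / r) powr \<delta>) * V r"
    using decay r R by simp
  also have "\<dots> \<le> ennreal (C0 * (R / r) powr \<delta>) * ennreal C1"
    by (intro mult_left_mono S_bound r(1)) simp
  also have "\<dots> = ennreal (C0 * (R / r) powr \<delta> * C1)"
    using C0 C1 by (simp add: ennreal_mult)
  also have "\<dots> \<le> ennreal (C0 * C1 * 2 powr \<delta> * (R / Sup S) powr \<delta>)"
    using powr_le C0 C1 by (intro ennreal_leI) (simp add: mult_left_mono ac_simps)
  finally show ?thesis .
qed

lemma two_power_powr: "((2::real) ^ k) powr \<delta> = (2 powr \<delta>) ^ k"
  by (simp add: powr_power powr_realpow[symmetric] powr_powr mult.commute)

lemma dyadic_bound_below_scale:
  fixes V :: "real \<Rightarrow> ennreal"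
  assumes \<rho>: "0 < \<rho>" and \<delta>: "0 \<le> \<delta>" and A: "0 \<le> A" and C: "0 \<le> C"
    and below: "\<And>R. 0 < R \<Longrightarrow> R < \<rho> \<Longrightarrow> V R \<le> ennreal (A * (R / \<rho>) powr \<delta>)"
    and above: "\<And>R. \<rho> \<le> R \<Longrightarrow> V R \<le> ennreal (C * (R / \<rho>) ^ N)"
    and r: "0 < r" "r \<le> a * \<rho>"
  shows "V (2 ^ k * r) \<le> ennreal ((A + C * a ^ N) * (r / \<rho>) powr \<delta> * (2 powr \<delta> * 2 ^ N) ^ k)"
proof -
  define s where "s = r / \<rho>"
  have s: "0 < s" "s \<le> a"
    using \<rho> r by (auto simp: s_def field_simps)
  have u: "2 ^ k * r / \<rho> = 2 ^ k * s"
    by (simp add: s_def)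
  have u_powr: "(2 ^ k * s) powr \<delta> = (2 powr \<delta>) ^ k * s powr \<delta>"
    using s by (simp add: powr_mult two_power_powr)
  have growth: "1 \<le> (2 powr \<delta>) ^ k" "1 \<le> ((2::real) ^ N) ^ k"
    using \<delta> by (simp_all add: one_le_power ge_one_powr_ge_zero)
  show ?thesis
  proof (cases "2 ^ k * r < \<rho>")
    case True
    then have "V (2 ^ k * r) \<le> ennreal (A * (2 powr \<delta>) ^ k * s powr \<delta>)"
      using below[of "2 ^ k * r"] r u u_powr by (simp add: mult.assoc)
    also have "\<dots> \<le> ennreal ((A + C * a ^ N) * s powr \<delta> * (2 powr \<delta> * 2 ^ N) ^ k)"
    proof (intro ennreal_leI)
      have "A * (2 powr \<delta>) ^ k \<le> (A + C * a ^ N) * ((2 powr \<delta>) ^ k * (2 ^ N) ^ k)"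
        using A C s growth by (intro mult_mono) auto
      then have "A * (2 powr \<delta>) ^ k * s powr \<delta> \<le> (A + C * a ^ N) * ((2 powr \<delta>) ^ k * (2 ^ N) ^ k) * s powr \<delta>"
        by (rule mult_right_mono) simp
      then show "A * (2 powr \<delta>) ^ k * s powr \<delta> \<le> (A + C * a ^ N) * s powr \<delta> * (2 powr \<delta> * 2 ^ N) ^ k"
        by (simp add: power_mult_distrib ac_simps)
    qed
    finally show ?thesis by (simp add: s_def)
  next
    case False
    then have u1: "1 \<le> 2 ^ k * s"
      using \<rho> by (simp add: s_def field_simps)
    have "(2 ^ k * s) ^ N \<le> (2 ^ k * s) powr \<delta> * (2 ^ k * s) ^ N"
      using u1 \<delta> by (simp add: ge_one_powr_ge_zero)
    also have "\<dots> \<le> (2 powr \<delta>) ^ k * s powr \<delta> * ((2 ^ k) ^ N * a ^ N)"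
      using s by (simp add: u_powr power_mult_distrib power_mono mult_left_mono)
    also have "\<dots> = a ^ N * (s powr \<delta> * (2 powr \<delta> * 2 ^ N) ^ k)"
      by (simp add: power_mult_distrib ac_simps flip: power_mult)
    finally have "C * (2 ^ k * s) ^ N \<le> C * a ^ N * (s powr \<delta> * (2 powr \<delta> * 2 ^ N) ^ k)"
      using C by (simp add: mult_left_mono mult.assoc)
    also have "\<dots> \<le> (A + C * a ^ N) * s powr \<delta> * (2 powr \<delta> * 2 ^ N) ^ k"
      using A by (simp add: algebra_simps)
    finally have "C * (2 ^ k * s) ^ N \<le> (A + C * a ^ N) * s powr \<delta> * (2 powr \<delta> * 2 ^ N) ^ k" .
    moreover have "V (2 ^ k * r) \<le> ennreal (C * (2 ^ k * s) ^ N)"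
      using above[of "2 ^ k * r"] False u by simp
    ultimately show ?thesis
      unfolding s_def by (meson ennreal_leI order_trans)
  qed
qed

lemma dyadic_bound_above_scale:
  fixes V :: "real \<Rightarrow> ennreal"
  assumes \<rho>: "0 < \<rho>" and \<delta>: "0 \<le> \<delta>" and A: "0 \<le> A" and C: "0 \<le> C"
    and below: "\<And>R. 0 < R \<Longrightarrow> R < \<rho> \<Longrightarrow> V R \<le> ennreal (A * (R / \<rho>) powr \<delta>)"
    and above: "\<And>R. \<rho> \<le> R \<Longrightarrow> V R \<le> ennreal (C * (R / \<rho>) ^ N)"
    and a: "0 < a" and r: "a * \<rho> \<le> r"
  shows "V (2 ^ k * r) \<le> ennreal ((C + A / a ^ N) * (r / \<rho>) ^ N * (2 ^ N) ^ k)"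
proof -
  have r_pos: "0 < r"
    using mult_pos_pos[OF a \<rho>] r by linarith
  define s where "s = r / \<rho>"
  have s: "a \<le> s" "0 < s"
    using \<rho> r r_pos by (simp_all add: s_def field_simps)
  have u: "2 ^ k * r / \<rho> = 2 ^ k * s"
    by (simp add: s_def)
  have growth: "1 \<le> ((2::real) ^ N) ^ k" "1 \<le> s ^ N / a ^ N"
    using a s by (simp_all add: one_le_power power_mono)
  show ?thesis
  proof (cases "2 ^ k * r < \<rho>")
    case True
    have "0 \<le> 2 ^ k * r / \<rho>" "2 ^ k * r / \<rho> \<le> 1"
      using True \<rho> r_pos by simp_all
    then have "(2 ^ k * s) powr \<delta> \<le> 1"
      using \<delta> by (simp add: u[symmetric] powr_le1)
    also have "1 \<le> s ^ N / a ^ N * (2 ^ N) ^ k"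
      using mult_mono[OF growth(2) growth(1)] s a by simp
    finally have "A * (2 ^ k * s) powr \<delta> \<le> A * (s ^ N / a ^ N) * (2 ^ N) ^ k"
      using A by (metis mult.assoc mult_left_mono)
    also have "\<dots> \<le> (C + A / a ^ N) * s ^ N * (2 ^ N) ^ k"
      using C s a by (simp add: algebra_simps)
    finally have "A * (2 ^ k * s) powr \<delta> \<le> (C + A / a ^ N) * s ^ N * (2 ^ N) ^ k" .
    moreover have "V (2 ^ k * r) \<le> ennreal (A * (2 ^ k * s) powr \<delta>)"
      using below[of "2 ^ k * r"] True r_pos u by simp
    ultimately show ?thesis
      unfolding s_def by (meson ennreal_leI order_trans)
  next
    case False
    have "C * (2 ^ k * s) ^ N \<le> (C + A / a ^ N) * s ^ N * (2 ^ N) ^ k"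
      using A a s by (simp add: algebra_simps power_mult_distrib flip: power_mult)
    moreover have "V (2 ^ k * r) \<le> ennreal (C * (2 ^ k * s) ^ N)"
      using above[of "2 ^ k * r"] False u by simp
    ultimately show ?thesis
      unfolding s_def by (meson ennreal_leI order_trans)
  qed
qed

lemma gauss_integral_bound_below_scale:
  fixes w :: "'a::euclidean_space \<Rightarrow> real" and \<rho> :: "'a \<Rightarrow> real"
  assumes wA2: "A2_weight w" and sets: "sets \<pi> = sets borel" and c: "0 < c"
    and \<delta>: "0 \<le> \<delta>" and A: "0 \<le> A" and C: "0 < C" and \<rho>: "\<And>x. 0 < \<rho> x"
    and below: "\<And>x R. 0 < R \<Longrightarrow> R < \<rho> x \<Longrightarrow> scaled_mass w \<pi> x R \<le> ennreal (A * (R / \<rho> x) powr \<delta>)"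
    and above: "\<And>x R. \<rho> x \<le> R \<Longrightarrow> scaled_mass w \<pi> x R \<le> ennreal (C * (R / \<rho> x) ^ N)"
    and a: "0 < a"
  shows "\<exists>D>0. \<forall>x t. 0 < t \<longrightarrow> sqrt t \<le> a * \<rho> x \<longrightarrow>
           gauss_integral w \<pi> c x t \<le> ennreal (D / t * (sqrt t / \<rho> x) powr \<delta>)"
proof -
  obtain D where D: "0 < D"
    and bound: "\<And>x t B. 0 < t \<Longrightarrow> 0 \<le> B \<Longrightarrow>
           (\<And>k. scaled_mass w \<pi> x (2 ^ k * sqrt t) \<le> ennreal (B * (2 powr \<delta> * 2 ^ N) ^ k)) \<Longrightarrow>
           gauss_integral w \<pi> c x t \<le> ennreal (D * B / t)"
    using gauss_integral_dyadic_bound[OF wA2 sets c, of "2 powr \<delta> * 2 ^ N"] by auto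
  have "gauss_integral w \<pi> c x t \<le> ennreal (D * (A + C * a ^ N) / t * (sqrt t / \<rho> x) powr \<delta>)"
    if t: "0 < t" "sqrt t \<le> a * \<rho> x" for x t
  proof -
    have "gauss_integral w \<pi> c x t \<le> ennreal (D * ((A + C * a ^ N) * (sqrt t / \<rho> x) powr \<delta>) / t)"
      using A C a t
      by (intro bound dyadic_bound_below_scale[OF \<rho> \<delta> A less_imp_le[OF C] below above]) auto
    then show ?thesis
      by (simp add: ac_simps)
  qed
  moreover have "0 < D * (A + C * a ^ N)"
    using D A C a by (simp add: add_nonneg_pos)
  ultimately show ?thesis
    by blast
qed

lemma gauss_integral_bound_above_scale:
  fixes w :: "'a::euclidean_space \<Rightarrow> real" and \<rho> :: "'a \<Rightarrow> real"
  assumes wA2: "A2_weight w" and sets: "sets \<pi> = sets borel" and c: "0 < c"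
    and \<delta>: "0 \<le> \<delta>" and A: "0 \<le> A" and C: "0 < C" and \<rho>: "\<And>x. 0 < \<rho> x"
    and below: "\<And>x R. 0 < R \<Longrightarrow> R < \<rho> x \<Longrightarrow> scaled_mass w \<pi> x R \<le> ennreal (A * (R / \<rho> x) powr \<delta>)"
    and above: "\<And>x R. \<rho> x \<le> R \<Longrightarrow> scaled_mass w \<pi> x R \<le> ennreal (C * (R / \<rho> x) ^ N)"
    and a: "0 < a"
  shows "\<exists>D>0. \<forall>x t. 0 < t \<longrightarrow> a * \<rho> x \<le> sqrt t \<longrightarrow>
           gauss_integral w \<pi> c x t \<le> ennreal (D / t * (sqrt t / \<rho> x) ^ N)"
proof -
  obtain D where D: "0 < D"
    and bound: "\<And>x t B. 0 < t \<Longrightarrow> 0 \<le> B \<Longrightarrow>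
           (\<And>k. scaled_mass w \<pi> x (2 ^ k * sqrt t) \<le> ennreal (B * (2 ^ N) ^ k)) \<Longrightarrow>
           gauss_integral w \<pi> c x t \<le> ennreal (D * B / t)"
    using gauss_integral_dyadic_bound[OF wA2 sets c, of "2 ^ N"] by auto
  have "gauss_integral w \<pi> c x t \<le> ennreal (D * (C + A / a ^ N) / t * (sqrt t / \<rho> x) ^ N)"
    if t: "0 < t" "a * \<rho> x \<le> sqrt t" for x t
  proof -
    have "gauss_integral w \<pi> c x t \<le> ennreal (D * ((C + A / a ^ N) * (sqrt t / \<rho> x) ^ N) / t)"
      using A C a t \<rho>[of x]
      by (intro bound dyadic_bound_above_scale[OF \<rho> \<delta> A less_imp_le[OF C] below above]) auto
    then show ?thesis
      by (simp add: ac_simps)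
  qed
  moreover have "0 < D * (C + A / a ^ N)"
    using D A C a by (simp add: add_pos_nonneg)
  ultimately show ?thesis
    by blast
qed

theorem lemma2p3:
  fixes w :: "'a::euclidean_space \<Rightarrow> real" and M :: "'a measure"
    and C0 \<delta> C1 C' c :: real and N0 :: nat
  defines "\<pi> \<equiv> density M (\<lambda>y. ennreal (w y))"
  defines "\<rho> \<equiv> rho_w w M C1"
  assumes dim: "DIM('a) \<ge> 3"
    and wA2: "A2_weight w"
    and wgrowth: "\<exists>\<beta>>2. \<exists>C>0. \<forall>x r s. 0 < r \<longrightarrow> 1 < s \<longrightarrow>
                   wmeas w (ball x (s * r)) \<ge> C * s powr \<beta> * wmeas w (ball x r)"
    and radon: "radon_measure M"
    and C0: "C0 > 0" and \<delta>: "\<delta> > 0" and C1: "C1 > 0"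
    and M1: "\<forall>x r R. 0 < r \<longrightarrow> r < R \<longrightarrow>
               ennreal (r\<^sup>2 / wmeas w (ball x r)) * emeasure \<pi> (ball x r)
                 \<le> ennreal (C0 * (r / R) powr \<delta> * (R\<^sup>2 / wmeas w (ball x R))) * emeasure \<pi> (ball x R)"
    and M2: "\<forall>x r. 0 < r \<longrightarrow>
               emeasure \<pi> (ball x (2 * r))
                 \<le> ennreal C1 * (emeasure \<pi> (ball x r) + ennreal (wmeas w (ball x r) / r\<^sup>2))"
    and rho_wd: "\<forall>x. crit_set w M C1 x \<noteq> {} \<and> bdd_above (crit_set w M C1 x)"
    and C': "C' > 0"
    and N0: "\<forall>x R. \<rho> x \<le> R \<longrightarrow>
               ennreal (R\<^sup>2 / wmeas w (ball x R)) * emeasure \<pi> (ball x R)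
                 \<le> ennreal (C' * (R / \<rho> x) ^ N0)"
    and c: "c > 0"
  shows "(\<forall>a>0. \<exists>C>0. \<forall>x t. 0 < t \<longrightarrow> sqrt t \<le> a * \<rho> x \<longrightarrow>
            (\<integral>\<^sup>+ y. ennreal (1 / min (wmeas w (ball x (sqrt t))) (wmeas w (ball y (sqrt t)))
                        * exp (- (dist x y)\<^sup>2 / (c * t))) \<partial>\<pi>)
              \<le> ennreal (C / t * (sqrt t / \<rho> x) powr \<delta>))
       \<and> (\<forall>a>0. \<exists>C>0. \<forall>x t. 0 < t \<longrightarrow> a * \<rho> x \<le> sqrt t \<longrightarrow>
            (\<integral>\<^sup>+ y. ennreal (1 / min (wmeas w (ball x (sqrt t))) (wmeas w (ball y (sqrt t)))
                        * exp (- (dist x y)\<^sup>2 / (c * t))) \<partial>\<pi>)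
              \<le> ennreal (C / t * (sqrt t / \<rho> x) ^ N0))"
proof -
  have sets: "sets \<pi> = sets borel"
    using radon unfolding \<pi>_def radon_measure_def by simp
  have crit: "crit_set w M C1 x = {r. 0 < r \<and> scaled_mass w \<pi> x r \<le> ennreal C1}" for x
    unfolding crit_set_def scaled_mass_def \<pi>_def ..
  have decay: "scaled_mass w \<pi> x r \<le> ennreal (C0 * (r / R) powr \<delta>) * scaled_mass w \<pi> x R"
    if "0 < r" "r < R" for x r R
  proof -
    have "scaled_mass w \<pi> x r
        \<le> ennreal (C0 * (r / R) powr \<delta> * (R\<^sup>2 / wmeas w (ball x R))) * emeasure \<pi> (ball x R)"
      using M1 that unfolding scaled_mass_def by blast
    then show ?thesis
      using C0 by (subst (asm) ennreal_mult_scaled_mass) auto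
  qed
  have \<rho>_pos: "0 < \<rho> x" for x
    unfolding \<rho>_def using rho_wd by (intro rho_w_pos) auto
  have below: "scaled_mass w \<pi> x R \<le> ennreal (C0 * C1 * 2 powr \<delta> * (R / \<rho> x) powr \<delta>)"
    if "0 < R" "R < \<rho> x" for x R
    using bound_below_Sup_of_decay[OF decay, of "crit_set w M C1 x"] rho_wd C0 C1 \<delta> that
    unfolding \<rho>_def rho_w_def crit by auto
  have above: "scaled_mass w \<pi> x R \<le> ennreal (C' * (R / \<rho> x) ^ N0)" if "\<rho> x \<le> R" for x R
    using N0 that unfolding scaled_mass_def by blast
  have "0 \<le> C0 * C1 * 2 powr \<delta>"
    using C0 C1 by simp
  from gauss_integral_bound_below_scale[OF wA2 sets c _ this C' \<rho>_pos below above]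
    gauss_integral_bound_above_scale[OF wA2 sets c _ this C' \<rho>_pos below above] \<delta>
  show ?thesis
    unfolding gauss_integral_def by auto
qed

end
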